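(* Let $t_1, t_2 \in \mathsf{Topo}$, let $f$ be an embedding of $t_1$ inside $t_2$, and let $pkt \in \mathsf{Pkt}$, $pt \in \mathsf{Path}(t_1)$ and $q \in \mathsf{PIFOTree}(t_1)$. Then $\widehat f(\mathsf{push}(q, pkt, pt)) = \mathsf{push}(\widehat f(q), pkt, \widetilde f(pt))$.
   Context: Fix a set $\mathsf{Pkt}$ of packets and a totally ordered set $\mathsf{Rk}$ of ranks (smaller is more favorable). PIFOs: for a set $S$, a PIFO over $S$ is a finite sequence of pairs $(s,r)\in S\times\mathsf{Rk}$ in insertion order; $\mathsf{PIFO}(S)$ is the set of these. $\mathsf{push}_{\mathsf{PIFO}}(p,s,r)$ appends $(s,r)$ to $p$. Topologies: $\mathsf{Topo}$ is the smallest set with $*\in\mathsf{Topo}$ and $\mathsf{Node}(\vec t)\in\mathsf{Topo}$ for $n\in\mathbb{N}$, $\vec t\in\mathsf{Topo}^n$. PIFO trees: $\mathsf{Leaf}(p)\in\mathsf{PIFOTree}( * )$ for $p\in\mathsf{PIFO}(\mathsf{Pkt})$; $\mathsf{Internal}(\vec q,p)\in\mathsf{PIFOTree}(\mathsf{Node}(\vec t))$ whenever $\vec t\in\mathsf{Topo}^n$, $p\in\mathsf{PIFO}(\{1,\dots,n\})$, $\vec q[i]\in\mathsf{PIFOTree}(\vec t[i])$. $\vec q[q'/i]$ replaces the $i$-th entry by $q'$. Paths: $\mathsf{Path}( * )=\mathsf{Rk}$; $\mathsf{Path}(\mathsf{Node}(\vec t))$ consists of $(i,r)::pt$ with $1\le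 i\le n$, $r\in\mathsf{Rk}$, $pt\in\mathsf{Path}(\vec t[i])$. push: $\mathsf{push}(\mathsf{Leaf}(p),pkt,r)=\mathsf{Leaf}(\mathsf{push}_{\mathsf{PIFO}}(p,pkt,r))$; $\mathsf{push}(\mathsf{Internal}(\vec q,p),pkt,(i,r)::pt)=\mathsf{Internal}(\vec q[\mathsf{push}(\vec q[i],pkt,pt)/i],\mathsf{push}_{\mathsf{PIFO}}(p,i,r))$. Addresses: $\mathsf{Addr}(t)\subseteq\mathbb{N}^*$ is the smallest set with $\epsilon\in\mathsf{Addr}(t)$ and $i\cdot\alpha\in\mathsf{Addr}(\mathsf{Node}(\vec t))$ for $1\le i\le n$, $\alpha\in\mathsf{Addr}(\vec t[i])$. Subtrees: $t/\epsilon=t$, $\mathsf{Node}(\vec t)/(i\cdot\alpha)=\vec t[i]/\alpha$. An embedding of $t_1$ in $t_2$ is an injective $f:\mathsf{Addr}(t_1)\to\mathsf{Addr}(t_2)$ with $f(\epsilon)=\epsilon$, $t_2/f(\alpha)=*$ whenever $t_1/\alpha=*$, and $\alpha$ a prefix of $\alpha'$ iff $f(\alpha)$ a prefix of $f(\alpha')$. If $t_1=*$ then $t_2=*$; if $t_1=\mathsf{Node}(\vec t_1)$, the map $f_i$ defined by $f(i\cdot\alpha)=f(i)\cdot f_i(\alpha)$ is an embedding of $t_1/i$ in $t_2/f(i)$, and $f(i)\neq\epsilon$. Lifting $\widehat f:\mathsf{PIFOTree}(t_1)\to\mathsf{PIFOTree}(t_2)$, by recursion on $t_1$: if $t_1=*$,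 $\widehat f(q)=q$. If $t_1=\mathsf{Node}(\vec t_1)$ with $n$ children and $q=\mathsf{Internal}(\vec q,p)$, define for each address $\alpha$ of $t_2$ that is a prefix of some $f(i)$ a tree $\widehat f(q)_\alpha\in\mathsf{PIFOTree}(t_2/\alpha)$, from longer to shorter $\alpha$: if $\alpha=f(i)$, $\widehat f(q)_\alpha=\widehat{f_i}(\vec q[i])$; otherwise $t_2/\alpha$ has some $m$ children and $\widehat f(q)_\alpha=\mathsf{Internal}(\vec q_\alpha,p_\alpha)$, where $\vec q_\alpha[j]=\widehat f(q)_{\alpha\cdot j}$ if $\alpha\cdot j$ is a prefix of some $f(i)$ and otherwise $\vec q_\alpha[j]$ is the tree of topology $t_2/(\alpha\cdot j)$ with all PIFOs empty; and $p_\alpha$ is obtained from $p$ by replacing each entry $(i,r)$ by $(j,r)$ where $\alpha\cdot j$ is a prefix of $f(i)$, deleting entries for which no such $j$ exists, keeping the order. Finally $\widehat f(q)=\widehat f(q)_\epsilon$. Path translation $\widetilde f:\mathsf{Path}(t_1)\to\mathsf{Path}(t_2)$, by recursion on $t_1$: if $t_1=*$, $\widetilde f(r)=r$. If $t_1=\mathsf{Node}(\vec t_1)$ and $pt=(i,r)::pt'$ with $f(i)=j_1j_2\cdots j_k$, then $\widetilde f(pt)=(j_1,r)::(j_2,r)::\cdots::(j_k,r)::\widetilde{f_i}(pt')$. *)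

theory Defs
  imports Main "HOL-Library.Sublist"
begin

text \<open>Topologies: Star is the leaf topology, Node ts has children ts (child i is ts ! (i-1),
  children are numbered from 1 as in the paper).\<close>
datatype topo = Star | Node "topo list"

text \<open>A PIFO over S is a list of (element, rank) pairs in insertion order.\<close>
type_synonym ('s, 'rk) pifo = "('s \<times> 'rk) list"

definition push_pifo :: "('s, 'rk) pifo \<Rightarrow> 's \<Rightarrow> 'rk \<Rightarrow> ('s, 'rk) pifo" where
  "push_pifo p s r = p @ [(s, r)]"

datatype ('pkt, 'rk) ptree =
    Leaf "('pkt, 'rk) pifo"
  | Internal "('pkt, 'rk) ptree list" "(nat, 'rk) pifo"

fun wf_tree :: "topo \<Rightarrow> ('pkt, 'rk) ptree \<Rightarrow> bool" where
  "wf_tree Star (Leaf p) = True"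
| "wf_tree (Node ts) (Internal qs p) =
     (list_all2 wf_tree ts qs
      \<and> (\<forall>(i, r) \<in> set p. 1 \<le> i \<and> i \<le> length ts))"
| "wf_tree _ _ = False"

datatype 'rk path = PLeaf 'rk | PCons nat 'rk "'rk path"

fun wf_path :: "topo \<Rightarrow> 'rk path \<Rightarrow> bool" where
  "wf_path Star (PLeaf r) = True"
| "wf_path (Node ts) (PCons i r pt) = (1 \<le> i \<and> i \<le> length ts \<and> wf_path (ts ! (i - 1)) pt)"
| "wf_path _ _ = False"

fun push :: "('pkt, 'rk) ptree \<Rightarrow> 'pkt \<Rightarrow> 'rk path \<Rightarrow> ('pkt, 'rk) ptree" where
  "push (Leaf p) pkt (PLeaf r) = Leaf (push_pifo p pkt r)"
| "push (Internal qs p) pkt (PCons i r pt) =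
     Internal (qs[i - 1 := push (qs ! (i - 1)) pkt pt]) (push_pifo p i r)"
| "push _ _ _ = undefined"

inductive is_addr :: "topo \<Rightarrow> nat list \<Rightarrow> bool" where
  addr_Nil: "is_addr t []"
| addr_Cons: "1 \<le> i \<Longrightarrow> i \<le> length ts \<Longrightarrow> is_addr (ts ! (i - 1)) \<alpha> \<Longrightarrow> is_addr (Node ts) (i # \<alpha>)"

fun subtree :: "topo \<Rightarrow> nat list \<Rightarrow> topo" where
  "subtree t [] = t"
| "subtree (Node ts) (i # \<alpha>) = subtree (ts ! (i - 1)) \<alpha>"
| "subtree Star (_ # _) = undefined"

definition is_embedding :: "topo \<Rightarrow> topo \<Rightarrow> (nat list \<Rightarrow> nat list) \<Rightarrow> bool" where
  "is_embedding t1 t2 f \<longleftrightarrow>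
     (\<forall>\<alpha>. is_addr t1 \<alpha> \<longrightarrow> is_addr t2 (f \<alpha>))
   \<and> inj_on f {\<alpha>. is_addr t1 \<alpha>}
   \<and> f [] = []
   \<and> (\<forall>\<alpha>. is_addr t1 \<alpha> \<longrightarrow> subtree t1 \<alpha> = Star \<longrightarrow> subtree t2 (f \<alpha>) = Star)
   \<and> (\<forall>\<alpha> \<alpha>'. is_addr t1 \<alpha> \<longrightarrow> is_addr t1 \<alpha>' \<longrightarrow> (prefix \<alpha> \<alpha>' \<longleftrightarrow> prefix (f \<alpha>) (f \<alpha>')))"

text \<open>The induced map f_i with f(i.alpha) = f(i).f_i(alpha).\<close>
definition sub_emb :: "(nat list \<Rightarrow> nat list) \<Rightarrow> nat \<Rightarrow> nat list \<Rightarrow> nat list" where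
  "sub_emb f i \<alpha> = drop (length (f [i])) (f (i # \<alpha>))"

fun empty_tree :: "topo \<Rightarrow> ('pkt, 'rk) ptree" where
  "empty_tree Star = Leaf []"
| "empty_tree (Node ts) = Internal (map empty_tree ts) []"

text \<open>p_alpha: keep entries (i,r) such that some alpha.j is a prefix of f(i), i.e. alpha is a
  strict prefix of f(i), replacing i by that (unique) j = f(i) ! |alpha|.\<close>
definition pifo_at :: "(nat list \<Rightarrow> nat list) \<Rightarrow> nat list \<Rightarrow> (nat, 'rk) pifo \<Rightarrow> (nat, 'rk) pifo" where
  "pifo_at f \<alpha> p = map (\<lambda>(i, r). (f [i] ! length \<alpha>, r)) (filter (\<lambda>(i, r). strict_prefix \<alpha> (f [i])) p)"

lemma size_mem_lt: "x \<in> set xs \<Longrightarrow> size x < Suc (size_list size xs)"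
  by (induction xs) auto

lemma zip_mem_size:
  "(i, ti, qi) \<in> set (zip is (zip ts qs)) \<Longrightarrow> size ti < Suc (size_list size (ts::topo list))"
  by (meson set_zip_leftD set_zip_rightD size_mem_lt)

text \<open>build gs f n p alpha s computes the tree at address alpha (where s = t2/alpha), given
  the already lifted children gs (gs ! (i-1) is the lifting of the i-th child).\<close>
function build :: "('pkt, 'rk) ptree list \<Rightarrow> (nat list \<Rightarrow> nat list) \<Rightarrow> nat \<Rightarrow> (nat, 'rk) pifo
                   \<Rightarrow> nat list \<Rightarrow> topo \<Rightarrow> ('pkt, 'rk) ptree" where
  "build gs f n p \<alpha> s =
     (if \<exists>i\<in>{1..n}. f [i] = \<alpha> then gs ! ((SOME i. i \<in> {1..n} \<and> f [i] = \<alpha>) - 1)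
      else (case s of
              Star \<Rightarrow> undefined
            | Node ss \<Rightarrow> Internal
                (map (\<lambda>(j, sj). if \<exists>i\<in>{1..n}. prefix (\<alpha> @ [j]) (f [i])
                                then build gs f n p (\<alpha> @ [j]) sj else empty_tree sj)
                     (zip [1..<length ss + 1] ss))
                (pifo_at f \<alpha> p)))"
  by pat_completeness auto
termination
  by (relation "measure (\<lambda>(_, _, _, _, _, s). size s)")
     (auto dest!: set_zip_rightD intro: size_mem_lt)

function lift :: "(nat list \<Rightarrow> nat list) \<Rightarrow> topo \<Rightarrow> topo \<Rightarrow> ('pkt, 'rk) ptree \<Rightarrow> ('pkt, 'rk) ptree" where
  "lift f Star t2 q = q"
| "lift f (Node ts) t2 (Leaf p) = undefined"
| "lift f (Node ts) t2 (Internal qs p) =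
     build (map (\<lambda>(i, ti, qi). lift (sub_emb f i) ti (subtree t2 (f [i])) qi)
                (zip [1..<length ts + 1] (zip ts qs)))
           f (length ts) p [] t2"
  by pat_completeness auto
termination
  by (relation "measure (\<lambda>(_, t1, _, _). size t1)")
     (auto dest!: zip_mem_size)

fun tpath :: "(nat list \<Rightarrow> nat list) \<Rightarrow> topo \<Rightarrow> 'rk path \<Rightarrow> 'rk path" where
  "tpath f Star (PLeaf r) = PLeaf r"
| "tpath f (Node ts) (PCons i r pt) =
     foldr (\<lambda>j acc. PCons j r acc) (f [i]) (tpath (sub_emb f i) (ts ! (i - 1)) pt)"
| "tpath _ _ _ = undefined"

end

(* Pushing along (i, r) :: pt' changes only the i-th child of q and appends
   (i, r) to the root PIFO.  In the lifted tree the i-th child sits at f [i] = j1 ... jk; at the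
   node reached by j1 ... jl the lifted PIFO gains exactly the entry (j(l+1), r) and only the
   child j(l+1) changes, which is what pushing along (j1, r) :: ... :: (jk, r) does, while nodes
   off this spine are untouched.  At f [i] itself the claim is the induction hypothesis for the
   child embedding sub_emb f i. *)
theory Submission
  imports Defs
begin

declare build.simps[simp del]

lemma is_addr_Cons_iff:
  "is_addr t (i # \<alpha>) \<longleftrightarrow> (\<exists>ts. t = Node ts \<and> 1 \<le> i \<and> i \<le> length ts \<and> is_addr (ts ! (i - 1)) \<alpha>)"
  by (auto elim: is_addr.cases intro: addr_Cons)

lemma is_addr_append:
  "is_addr t (\<alpha> @ \<beta>) \<longleftrightarrow> is_addr t \<alpha> \<and> is_addr (subtree t \<alpha>) \<beta>"
  by (induction \<alpha> arbitrary: t) (auto simp: is_addr_Cons_iff intro: addr_Nil)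

lemma subtree_append:
  "is_addr t \<alpha> \<Longrightarrow> subtree t (\<alpha> @ \<beta>) = subtree (subtree t \<alpha>) \<beta>"
  by (induction \<alpha> arbitrary: t) (auto simp: is_addr_Cons_iff)

lemma is_addr_singleton: "1 \<le> i \<Longrightarrow> i \<le> length ts \<Longrightarrow> is_addr (Node ts) [i]"
  by (auto intro: addr_Cons addr_Nil)

lemma embedding_prefix_singleton_eq:
  assumes "is_embedding (Node ts) t2 f" "1 \<le> i" "i \<le> length ts" "1 \<le> i'" "i' \<le> length ts"
    and "prefix (f [i']) (f [i])"
  shows "i' = i"
proof -
  have "prefix [i'] [i]"
    using assms is_addr_singleton unfolding is_embedding_def by blast
  then show ?thesis by simp
qed

lemma embedding_Cons:
  assumes "is_embedding (Node ts) t2 f" "1 \<le> i" "i \<le> length ts" "is_addr (ts ! (i - 1)) \<alpha>"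
  shows "f (i # \<alpha>) = f [i] @ sub_emb f i \<alpha>"
proof -
  have "prefix [i] (i # \<alpha>)" by simp
  then have "prefix (f [i]) (f (i # \<alpha>))"
    using assms addr_Cons[of i ts \<alpha>] is_addr_singleton unfolding is_embedding_def by blast
  then show ?thesis by (auto simp: prefix_def sub_emb_def)
qed

lemma is_embedding_sub_emb:
  assumes emb: "is_embedding (Node ts) t2 f" and i: "1 \<le> i" "i \<le> length ts"
  shows "is_embedding (ts ! (i - 1)) (subtree t2 (f [i])) (sub_emb f i)"
proof -
  let ?g = "sub_emb f i" and ?ti = "ts ! (i - 1)" and ?u = "subtree t2 (f [i])"
  have addr_fi: "is_addr t2 (f [i])"
    using emb i is_addr_singleton unfolding is_embedding_def by blast
  have f_Cons: "f (i # \<alpha>) = f [i] @ ?g \<alpha>" if "is_addr ?ti \<alpha>" for \<alpha>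
    using embedding_Cons[OF emb i that] .
  have addr_Cons_i: "is_addr (Node ts) (i # \<alpha>)" if "is_addr ?ti \<alpha>" for \<alpha>
    using i that by (rule addr_Cons)
  have "is_addr ?u (?g \<alpha>)" if "is_addr ?ti \<alpha>" for \<alpha>
    using emb addr_Cons_i[OF that] f_Cons[OF that] is_addr_append
    unfolding is_embedding_def by metis
  moreover have "inj_on ?g {\<alpha>. is_addr ?ti \<alpha>}"
  proof (rule inj_onI)
    fix \<alpha> \<alpha>' assume "\<alpha> \<in> {\<alpha>. is_addr ?ti \<alpha>}" "\<alpha>' \<in> {\<alpha>. is_addr ?ti \<alpha>}" "?g \<alpha> = ?g \<alpha>'"
    then have "i # \<alpha> = i # \<alpha>'"
      using emb addr_Cons_i f_Cons unfolding is_embedding_def inj_on_def by (metis mem_Collect_eq)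
    then show "\<alpha> = \<alpha>'" by simp
  qed
  moreover have "subtree ?u (?g \<alpha>) = Star" if "is_addr ?ti \<alpha>" "subtree ?ti \<alpha> = Star" for \<alpha>
  proof -
    have "subtree t2 (f (i # \<alpha>)) = Star"
      using emb addr_Cons_i[OF that(1)] that(2) unfolding is_embedding_def by fastforce
    then show ?thesis using f_Cons[OF that(1)] subtree_append[OF addr_fi] by simp
  qed
  moreover have "prefix \<alpha> \<alpha>' \<longleftrightarrow> prefix (?g \<alpha>) (?g \<alpha>')"
    if "is_addr ?ti \<alpha>" "is_addr ?ti \<alpha>'" for \<alpha> \<alpha>'
  proof -
    have "prefix \<alpha> \<alpha>' \<longleftrightarrow> prefix (i # \<alpha>) (i # \<alpha>')" by simp
    also have "\<dots> \<longleftrightarrow> prefix (f (i # \<alpha>)) (f (i # \<alpha>'))"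
      using emb addr_Cons_i that unfolding is_embedding_def by blast
    finally show ?thesis using f_Cons that by simp
  qed
  ultimately show ?thesis unfolding is_embedding_def by (simp add: sub_emb_def)
qed

lemma map_eq_list_update_nth:
  assumes "length xs = length ys" "m < length ys" "g (xs ! m) = F (h (ys ! m))"
    and "\<And>k. k < length ys \<Longrightarrow> k \<noteq> m \<Longrightarrow> g (xs ! k) = h (ys ! k)"
  shows "map g xs = (map h ys)[m := F (map h ys ! m)]"
  using assms by (intro nth_equalityI) (auto simp: nth_list_update)

lemma build_image:
  "\<exists>i\<in>{1..n}. f [i] = \<alpha> \<Longrightarrow> build gs f n p \<alpha> s = gs ! ((SOME i. i \<in> {1..n} \<and> f [i] = \<alpha>) - 1)"
  by (subst build.simps) simp

lemma build_Node:
  "\<not> (\<exists>i\<in>{1..n}. f [i] = \<alpha>) \<Longrightarrow> build gs f n p \<alpha> (Node ss) =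
     Internal (map (\<lambda>(j, sj). if \<exists>i\<in>{1..n}. prefix (\<alpha> @ [j]) (f [i])
                                then build gs f n p (\<alpha> @ [j]) sj else empty_tree sj)
                     (zip [1..<length ss + 1] ss)) (pifo_at f \<alpha> p)"
  by (subst build.simps) simp

lemma build_Star:
  "\<not> (\<exists>i\<in>{1..n}. f [i] = \<alpha>) \<Longrightarrow> build gs f n p \<alpha> Star = undefined"
  by (subst build.simps) simp

lemma build_image_embedding:
  assumes "is_embedding (Node ts) t2 f" "1 \<le> i" "i \<le> length ts"
  shows "build gs f (length ts) p (f [i]) s = gs ! (i - 1)"
proof -
  have "(SOME i'. i' \<in> {1..length ts} \<and> f [i'] = f [i]) = i"
    using assms embedding_prefix_singleton_eq[OF assms] by (intro some_equality) auto
  then show ?thesis using assms by (subst build_image) auto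
qed

lemma build_update_not_prefix:
  "\<not> prefix \<beta> (f [i]) \<Longrightarrow> 1 \<le> i \<Longrightarrow>
   build (gs[i - 1 := x]) f n (p @ [(i, r)]) \<beta> s = build gs f n p \<beta> s"
proof (induction gs f n p \<beta> s rule: build.induct)
  case (1 gs f n p \<alpha> s)
  show ?case
  proof (cases "\<exists>i\<in>{1..n}. f [i] = \<alpha>")
    case True
    define k where "k = (SOME i. i \<in> {1..n} \<and> f [i] = \<alpha>)"
    have k: "k \<in> {1..n} \<and> f [k] = \<alpha>"
      using True unfolding k_def by (metis (mono_tags, lifting) someI)
    then have "k \<noteq> i" using "1.prems" by auto
    then have "k - 1 \<noteq> i - 1" using k "1.prems" by auto
    then show ?thesis unfolding build_image[OF True] k_def[symmetric] by simp
  next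
    case False
    show ?thesis
    proof (cases s)
      case Star then show ?thesis using False by (simp add: build_Star)
    next
      case (Node ss)
      have "pifo_at f \<alpha> (p @ [(i, r)]) = pifo_at f \<alpha> p"
        using "1.prems" by (auto simp: pifo_at_def dest: prefix_order.less_imp_le)
      moreover have "\<not> prefix (\<alpha> @ [j]) (f [i])" for j
        using "1.prems" by (meson prefix_order.dual_order.trans prefixI)
      ultimately show ?thesis
        using "1.IH"[OF False Node] "1.prems"(2)
        by (auto simp: Node build_Node[OF False] intro!: map_cong)
    qed
  qed
qed

lemma build_push_spine:
  assumes emb: "is_embedding (Node ts) t2 f" and i: "1 \<le> i" "i \<le> length ts"
    and len: "length gs = length ts"
  shows "f [i] = \<alpha> @ d \<Longrightarrow>
    build (gs[i - 1 := push (gs ! (i - 1)) pkt X]) f (length ts) (p @ [(i, r)]) \<alpha> (subtree t2 \<alpha>)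
    = push (build gs f (length ts) p \<alpha> (subtree t2 \<alpha>)) pkt (foldr (\<lambda>j acc. PCons j r acc) d X)"
proof (induction d arbitrary: \<alpha>)
  case Nil
  then have "\<alpha> = f [i]" by simp
  then show ?case
    using i len by (simp add: build_image_embedding[OF emb i])
next
  case (Cons j d)
  have "is_addr t2 (f [i])"
    using emb i is_addr_singleton unfolding is_embedding_def by blast
  then have addr: "is_addr t2 \<alpha>" "is_addr (subtree t2 \<alpha>) (j # d)"
    using Cons.prems is_addr_append by metis+
  then obtain ss where ss: "subtree t2 \<alpha> = Node ss" "1 \<le> j" "j \<le> length ss"
    by (auto simp: is_addr_Cons_iff)
  have not_image: "\<not> (\<exists>i'\<in>{1..length ts}. f [i'] = \<alpha>)"
    using embedding_prefix_singleton_eq[OF emb i] Cons.prems by force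
  have on_spine: "\<exists>i'\<in>{1..length ts}. prefix (\<alpha> @ [j]) (f [i'])"
    using Cons.prems i by (intro bexI[of _ i]) auto
  have off_spine: "build (gs[i - 1 := push (gs ! (i - 1)) pkt X]) f (length ts) (p @ [(i, r)])
      (\<alpha> @ [Suc k]) s = build gs f (length ts) p (\<alpha> @ [Suc k]) s" if "k \<noteq> j - 1" for k s
    using Cons.prems that ss(2) i by (intro build_update_not_prefix) auto
  have "subtree t2 (\<alpha> @ [j]) = ss ! (j - 1)"
    using subtree_append[OF addr(1), of "[j]"] ss by simp
  then have IH: "build (gs[i - 1 := push (gs ! (i - 1)) pkt X]) f (length ts) (p @ [(i, r)])
      (\<alpha> @ [j]) (ss ! (j - 1))
    = push (build gs f (length ts) p (\<alpha> @ [j]) (ss ! (j - 1))) pkt (foldr (\<lambda>j acc. PCons j r acc) d X)"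
    using Cons.IH[of "\<alpha> @ [j]"] Cons.prems by simp
  have pifo: "pifo_at f \<alpha> (p @ [(i, r)]) = pifo_at f \<alpha> p @ [(j, r)]"
    using Cons.prems by (simp add: pifo_at_def strict_prefix_def)
  show ?case
    unfolding ss(1) build_Node[OF not_image] pifo foldr_Cons o_apply push.simps push_pifo_def
    by (simp del: upt_Suc, rule map_eq_list_update_nth)
      (use ss(2,3) IH on_spine off_spine i in \<open>auto simp del: upt_Suc\<close>)
qed

definition lifted_children ::
    "(nat list \<Rightarrow> nat list) \<Rightarrow> topo list \<Rightarrow> topo \<Rightarrow> ('pkt, 'rk) ptree list \<Rightarrow> ('pkt, 'rk) ptree list" where
  "lifted_children f ts t2 qs =
     map (\<lambda>(i, ti, qi). lift (sub_emb f i) ti (subtree t2 (f [i])) qi) (zip [1..<length ts + 1] (zip ts qs))"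

lemma lift_Internal:
  "lift f (Node ts) t2 (Internal qs p) = build (lifted_children f ts t2 qs) f (length ts) p [] t2"
  by (simp add: lifted_children_def)

lemma lifted_children_update:
  assumes i: "1 \<le> i" "i \<le> length ts" and len: "length qs = length ts"
    and child: "lift (sub_emb f i) (ts ! (i - 1)) (subtree t2 (f [i])) q'
      = push (lift (sub_emb f i) (ts ! (i - 1)) (subtree t2 (f [i])) (qs ! (i - 1))) pkt X"
  shows "lifted_children f ts t2 (qs[i - 1 := q'])
    = (lifted_children f ts t2 qs)[i - 1 := push (lifted_children f ts t2 qs ! (i - 1)) pkt X]"
  unfolding lifted_children_def
  by (rule map_eq_list_update_nth) (use i len child in \<open>auto simp del: upt_Suc\<close>)

theorem lemma5p10:
  fixes t1 t2 :: topo and f :: "nat list \<Rightarrow> nat list"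
    and pkt :: 'pkt and pt :: "'rk::linorder path" and q :: "('pkt, 'rk) ptree"
  assumes "is_embedding t1 t2 f"
    and "wf_path t1 pt"
    and "wf_tree t1 q"
  shows "lift f t1 t2 (push q pkt pt) = push (lift f t1 t2 q) pkt (tpath f t1 pt)"
  using assms
proof (induction t1 arbitrary: t2 f pt q)
  case Star
  then show ?case by (cases pt; cases q) auto
next
  case (Node ts)
  obtain i r pt' where pt: "pt = PCons i r pt'" and i: "1 \<le> i" "i \<le> length ts"
    and wf_pt': "wf_path (ts ! (i - 1)) pt'"
    using Node.prems(2) by (cases pt) auto
  obtain qs p where q: "q = Internal qs p" and wf_qs: "list_all2 wf_tree ts qs"
    using Node.prems(3) by (cases q) auto
  let ?X = "tpath (sub_emb f i) (ts ! (i - 1)) pt'"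
  let ?gs = "lifted_children f ts t2 qs"
  have "lift (sub_emb f i) (ts ! (i - 1)) (subtree t2 (f [i])) (push (qs ! (i - 1)) pkt pt')
      = push (lift (sub_emb f i) (ts ! (i - 1)) (subtree t2 (f [i])) (qs ! (i - 1))) pkt ?X"
    using Node.IH[OF _ is_embedding_sub_emb[OF Node.prems(1) i] wf_pt'] i wf_qs
    by (simp add: list_all2_nthD)
  then have children: "lifted_children f ts t2 (qs[i - 1 := push (qs ! (i - 1)) pkt pt'])
      = ?gs[i - 1 := push (?gs ! (i - 1)) pkt ?X]"
    using i wf_qs by (intro lifted_children_update) (auto dest: list_all2_lengthD)
  have "length ?gs = length ts"
    using wf_qs by (simp add: lifted_children_def list_all2_lengthD del: upt_Suc)
  then have "lift f (Node ts) t2 (push q pkt pt)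
      = push (build ?gs f (length ts) p [] t2) pkt (foldr (\<lambda>j acc. PCons j r acc) (f [i]) ?X)"
    using build_push_spine[OF Node.prems(1) i, of ?gs "[]" "f [i]"] children
    by (simp add: pt q push_pifo_def lift_Internal del: lift.simps)
  then show ?case
    by (simp add: pt q lift_Internal del: lift.simps)
qed

end
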